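(* Let $(V,E,d)$ be a multi-weighted game graph and $v\in V$. If $\tau$ is a strategy of Player 2 winning from $(v,\vec H)$ in the perfect half space game $\mathrm{PHS}(\widehat V,\widehat E,d)$ for some $\vec H\in\mathcal H$, then the strategy obtained from $\tau$ by projecting away the perfect half space components (and keeping track of them internally, starting from $\vec H$) is winning for Player 2 from $v$ in the bounding game $\mathrm{Bnd}(V,E,d)$. In particular, if Player 2 wins $\mathrm{PHS}(\widehat V,\widehat E,d)$ from $v$, he wins $\mathrm{Bnd}(V,E,d)$ from $v$; and if $\tau$ is positional and perfect half space oblivious, its projection is a positional strategy in $\mathrm{Bnd}(V,E,d)$.
   Context: A multi-weighted game graph is $(V,E,d)$ with $d\ge1$, finite $V=V_1\uplus V_2$, finite $E\subseteq V\times\mathbb Z^d\times V$ with every vertex having an outgoing edge, strict alternation of players, weights determined by endpoints, not all weights zero; $\|\vec w\|=\max_i|\vec w(i)|$, $\|E\|$ the maximal norm of an edge weight. Bounding game $\mathrm{Bnd}(V,E,d)$: a play $v_0\xrightarrow{\vec w_1}v_1\cdots$ is won by Player 1 iff $\{\|\sum_{j=1}^n\vec w_j\|:n\in\mathbb N\}$ is bounded; otherwise by Player 2. A partially perfect half space is a tuple $(\vec h_1,\dots,\vec h_k)$, $0\le k\le d$, of mutually orthogonal nonzero vectors in $\mathbb Z^d$; perfect if $k=d$; norm $\max_j\|\vec h_j\|$. $\mathcal H$ is the set of perfect half spaces of norm at most $|V|\cdot\|E\|$. $(\widehat V,\widehat E,d)$ has $\widehat V_i=V_i\times\mathcal H$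 and edges $(v,\vec H)\xrightarrow{\vec w}(v',\vec H')$ for $v\xrightarrow{\vec w}v'\in E$, $\vec H,\vec H'\in\mathcal H$, with $\vec H=\vec H'$ whenever $v\in V_1$. In $\mathrm{PHS}(\widehat V,\widehat E,d)$ a play $(v_0,\vec H_0)\xrightarrow{\vec w_1}(v_1,\vec H_1)\cdots$ is won by Player 2 if some partially perfect half space $(\vec g_1,\dots,\vec g_k)$, $k>0$, is a prefix of $\vec H_i$ for all large $i$, with $\limsup_n\sum_{j\le n}\vec w_j\cdot\vec g_k=-\infty$ and $\liminf_n\sum_{j\le n}\vec w_j\cdot\vec g_\ell<+\infty$ for $\ell<k$; otherwise by Player 1. Player 2 wins PHS from $v$ if he wins from $(v,\vec H)$ for some $\vec H\in\mathcal H$. A positional Player 2 strategy is perfect half space oblivious if at each $v\in V_2$ it makes the same move at $(v,\vec H)$ for all $\vec H$. *)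

theory Defs
  imports Main "HOL-Library.Sublist"
begin

text \<open>Vectors in Z^d are functions nat => int vanishing at indices >= d.\<close>
type_synonym vec = "nat \<Rightarrow> int"

definition in_Zd :: "nat \<Rightarrow> vec \<Rightarrow> bool" where
  "in_Zd d w \<longleftrightarrow> (\<forall>i\<ge>d. w i = 0)"

definition vnorm :: "nat \<Rightarrow> vec \<Rightarrow> int" where
  "vnorm d w = Max ((\<lambda>i. \<bar>w i\<bar>) ` {..<d})"

definition dotp :: "nat \<Rightarrow> vec \<Rightarrow> vec \<Rightarrow> int" where
  "dotp d w g = (\<Sum>i<d. w i * g i)"

definition game_graph :: "'v set \<Rightarrow> 'v set \<Rightarrow> ('v \<times> vec \<times> 'v) set \<Rightarrow> nat \<Rightarrow> bool" where
  "game_graph V1 V2 E d \<longleftrightarrow>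
     d \<ge> 1 \<and> finite (V1 \<union> V2) \<and> V1 \<inter> V2 = {} \<and> finite E \<and>
     E \<subseteq> (V1 \<union> V2) \<times> {w. in_Zd d w} \<times> (V1 \<union> V2) \<and>
     (\<forall>v\<in>V1 \<union> V2. \<exists>w v'. (v, w, v') \<in> E) \<and>
     (\<forall>v w v'. (v, w, v') \<in> E \<longrightarrow> (v \<in> V1 \<longrightarrow> v' \<in> V2) \<and> (v \<in> V2 \<longrightarrow> v' \<in> V1)) \<and>
     (\<forall>v w w' v'. (v, w, v') \<in> E \<longrightarrow> (v, w', v') \<in> E \<longrightarrow> w = w') \<and>
     (\<exists>v w v'. (v, w, v') \<in> E \<and> w \<noteq> (\<lambda>_. 0))"

definition edge_norm :: "nat \<Rightarrow> ('v \<times> vec \<times> 'v) set \<Rightarrow> int" where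
  "edge_norm d E = Max ((\<lambda>(v, w, v'). vnorm d w) ` E)"

text \<open>Partially perfect half spaces: lists of mutually orthogonal nonzero vectors in Z^d.\<close>
definition pphs :: "nat \<Rightarrow> vec list \<Rightarrow> bool" where
  "pphs d gs \<longleftrightarrow> length gs \<le> d \<and> (\<forall>g\<in>set gs. in_Zd d g \<and> g \<noteq> (\<lambda>_. 0)) \<and>
     (\<forall>i<length gs. \<forall>j<length gs. i \<noteq> j \<longrightarrow> dotp d (gs ! i) (gs ! j) = 0)"

definition hs_norm :: "nat \<Rightarrow> vec list \<Rightarrow> int" where
  "hs_norm d gs = Max (vnorm d ` set gs)"

definition HS :: "'v set \<Rightarrow> 'v set \<Rightarrow> ('v \<times> vec \<times> 'v) set \<Rightarrow> nat \<Rightarrow> vec list set" where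
  "HS V1 V2 E d = {H. pphs d H \<and> length H = d \<and>
       hs_norm d H \<le> int (card (V1 \<union> V2)) * edge_norm d E}"

definition hatV1 :: "'v set \<Rightarrow> 'v set \<Rightarrow> ('v \<times> vec \<times> 'v) set \<Rightarrow> nat \<Rightarrow> ('v \<times> vec list) set" where
  "hatV1 V1 V2 E d = V1 \<times> HS V1 V2 E d"

definition hatV2 :: "'v set \<Rightarrow> 'v set \<Rightarrow> ('v \<times> vec \<times> 'v) set \<Rightarrow> nat \<Rightarrow> ('v \<times> vec list) set" where
  "hatV2 V1 V2 E d = V2 \<times> HS V1 V2 E d"

definition hatE :: "'v set \<Rightarrow> 'v set \<Rightarrow> ('v \<times> vec \<times> 'v) set \<Rightarrow> nat
     \<Rightarrow> (('v \<times> vec list) \<times> vec \<times> ('v \<times> vec list)) set" where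
  "hatE V1 V2 E d = {((v, H), w, (v', H')) | v w v' H H'.
      (v, w, v') \<in> E \<and> H \<in> HS V1 V2 E d \<and> H' \<in> HS V1 V2 E d \<and> (v \<in> V1 \<longrightarrow> H = H')}"

text \<open>Plays: vertex sequence rho and weight sequence ws, ws i being the weight of the
  (i+1)-th edge rho i -> rho (i+1).\<close>
definition play_from :: "('a \<times> vec \<times> 'a) set \<Rightarrow> 'a \<Rightarrow> (nat \<Rightarrow> 'a) \<Rightarrow> (nat \<Rightarrow> vec) \<Rightarrow> bool" where
  "play_from E v0 \<rho> ws \<longleftrightarrow> \<rho> 0 = v0 \<and> (\<forall>i. (\<rho> i, ws i, \<rho> (Suc i)) \<in> E)"

definition strategy2 :: "'a set \<Rightarrow> ('a \<times> vec \<times> 'a) set \<Rightarrow> ('a list \<Rightarrow> 'a) \<Rightarrow> bool" where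
  "strategy2 V2 E \<tau> \<longleftrightarrow> (\<forall>h. h \<noteq> [] \<longrightarrow> last h \<in> V2 \<longrightarrow> (\<exists>w. (last h, w, \<tau> h) \<in> E))"

definition consistent2 :: "'a set \<Rightarrow> ('a list \<Rightarrow> 'a) \<Rightarrow> (nat \<Rightarrow> 'a) \<Rightarrow> bool" where
  "consistent2 V2 \<tau> \<rho> \<longleftrightarrow> (\<forall>i. \<rho> i \<in> V2 \<longrightarrow> \<rho> (Suc i) = \<tau> (map \<rho> [0..<Suc i]))"

definition winning2 :: "'a set \<Rightarrow> ('a \<times> vec \<times> 'a) set \<Rightarrow> ((nat \<Rightarrow> 'a) \<Rightarrow> (nat \<Rightarrow> vec) \<Rightarrow> bool)
     \<Rightarrow> 'a \<Rightarrow> ('a list \<Rightarrow> 'a) \<Rightarrow> bool" where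
  "winning2 V2 E Win v0 \<tau> \<longleftrightarrow> strategy2 V2 E \<tau> \<and>
     (\<forall>\<rho> ws. play_from E v0 \<rho> ws \<and> consistent2 V2 \<tau> \<rho> \<longrightarrow> Win \<rho> ws)"

definition wins2 :: "'a set \<Rightarrow> ('a \<times> vec \<times> 'a) set \<Rightarrow> ((nat \<Rightarrow> 'a) \<Rightarrow> (nat \<Rightarrow> vec) \<Rightarrow> bool)
     \<Rightarrow> 'a \<Rightarrow> bool" where
  "wins2 V2 E Win v0 \<longleftrightarrow> (\<exists>\<tau>. winning2 V2 E Win v0 \<tau>)"

definition positional2 :: "'a set \<Rightarrow> ('a list \<Rightarrow> 'a) \<Rightarrow> bool" where
  "positional2 V2 \<tau> \<longleftrightarrow> (\<forall>h h'. h \<noteq> [] \<longrightarrow> h' \<noteq> [] \<longrightarrow> last h \<in> V2 \<longrightarrow> last h = last h' \<longrightarrow> \<tau> h = \<tau> h')"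

definition hs_oblivious :: "('v \<times> 'h) set \<Rightarrow> (('v \<times> 'h) list \<Rightarrow> ('v \<times> 'h)) \<Rightarrow> bool" where
  "hs_oblivious hV2 \<tau> \<longleftrightarrow> (\<forall>h h'. h \<noteq> [] \<longrightarrow> h' \<noteq> [] \<longrightarrow> last h \<in> hV2 \<longrightarrow> last h' \<in> hV2 \<longrightarrow>
       fst (last h) = fst (last h') \<longrightarrow> fst (\<tau> h) = fst (\<tau> h'))"

definition bnd_win2 :: "nat \<Rightarrow> (nat \<Rightarrow> 'a) \<Rightarrow> (nat \<Rightarrow> vec) \<Rightarrow> bool" where
  "bnd_win2 d \<rho> ws \<longleftrightarrow> \<not> (\<exists>B. \<forall>n. vnorm d (\<lambda>i. \<Sum>j<n. ws j i) \<le> B)"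

definition phs_win2 :: "nat \<Rightarrow> (nat \<Rightarrow> 'v \<times> vec list) \<Rightarrow> (nat \<Rightarrow> vec) \<Rightarrow> bool" where
  "phs_win2 d \<rho> ws \<longleftrightarrow> (\<exists>gs. gs \<noteq> [] \<and> pphs d gs \<and>
      (\<exists>N. \<forall>i\<ge>N. prefix gs (snd (\<rho> i))) \<and>
      (\<forall>B. \<exists>N. \<forall>n\<ge>N. (\<Sum>j<n. dotp d (ws j) (last gs)) < B) \<and>
      (\<forall>l < length gs - 1. \<exists>B. \<forall>N. \<exists>n\<ge>N. (\<Sum>j<n. dotp d (ws j) (gs ! l)) \<le> B))"

text \<open>Projection of a PHS strategy: track the half space component internally, starting
  from H. lift_rev works on reversed histories.\<close>
fun lift_rev :: "'v set \<Rightarrow> (('v \<times> 'h) list \<Rightarrow> ('v \<times> 'h)) \<Rightarrow> 'h \<Rightarrow> 'v list \<Rightarrow> ('v \<times> 'h) list" where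
  "lift_rev V2 \<tau> H [] = []"
| "lift_rev V2 \<tau> H [v] = [(v, H)]"
| "lift_rev V2 \<tau> H (v' # v # rest) =
     (let hh = lift_rev V2 \<tau> H (v # rest)
      in (v', if fst (hd hh) \<in> V2 then snd (\<tau> (rev hh)) else snd (hd hh)) # hh)"

definition proj :: "'v set \<Rightarrow> (('v \<times> 'h) list \<Rightarrow> ('v \<times> 'h)) \<Rightarrow> 'h \<Rightarrow> 'v list \<Rightarrow> 'v" where
  "proj V2 \<tau> H h = fst (\<tau> (rev (lift_rev V2 \<tau> H (rev h))))"

end

theory Submission
  imports Defs
begin

text \<open>The projected strategy replays \<tau> on a lifted history: the half space component stays fixed
  at Player 1 vertices and is the one chosen by \<tau> at Player 2 vertices. Every play consistent with
  the projection therefore lifts to a play of the PHS game that is consistent with \<tau> and carries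
  the same weights. Player 2 wins the lifted play, so for some vector \<open>g\<close> the partial sums of
  \<open>w\<^sub>j \<cdot> g\<close> tend to \<open>-\<infinity>\<close>; as \<open>|x \<cdot> g| \<le> \<parallel>x\<parallel> \<Sum>\<^sub>i |g i|\<close>, the partial sums of the weights are
  unbounded.\<close>

lemma abs_le_vnorm: "i < d \<Longrightarrow> \<bar>x i\<bar> \<le> vnorm d x"
  unfolding vnorm_def by (intro Max_ge) auto

lemma abs_dotp_le_vnorm:
  "\<bar>dotp d x g\<bar> \<le> vnorm d x * (\<Sum>i<d. \<bar>g i\<bar>)"
proof -
  have "\<bar>dotp d x g\<bar> \<le> (\<Sum>i<d. \<bar>x i\<bar> * \<bar>g i\<bar>)"
    unfolding dotp_def abs_mult[symmetric] by (rule sum_abs)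
  also have "\<dots> \<le> (\<Sum>i<d. vnorm d x * \<bar>g i\<bar>)"
    by (intro sum_mono mult_right_mono abs_le_vnorm) auto
  finally show ?thesis
    by (simp add: sum_distrib_left)
qed

lemma sum_dotp_left:
  "(\<Sum>j\<in>A. dotp d (ws j) g) = dotp d (\<lambda>i. \<Sum>j\<in>A. ws j i) g"
  unfolding dotp_def sum_distrib_right by (rule sum.swap)

lemma bnd_win2_if_dotp_sums_diverge:
  assumes "\<forall>B. \<exists>N. \<forall>n\<ge>N. (\<Sum>j<n. dotp d (ws j) g) < B"
  shows "bnd_win2 d \<rho> ws"
  unfolding bnd_win2_def
proof
  assume "\<exists>B. \<forall>n. vnorm d (\<lambda>i. \<Sum>j<n. ws j i) \<le> B"
  then obtain B where B: "\<And>n. vnorm d (\<lambda>i. \<Sum>j<n. ws j i) \<le> B" by blast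
  define C where "C = B * (\<Sum>i<d. \<bar>g i\<bar>)"
  have "- C \<le> (\<Sum>j<n. dotp d (ws j) g)" for n
  proof -
    have "\<bar>\<Sum>j<n. dotp d (ws j) g\<bar> \<le> vnorm d (\<lambda>i. \<Sum>j<n. ws j i) * (\<Sum>i<d. \<bar>g i\<bar>)"
      unfolding sum_dotp_left by (rule abs_dotp_le_vnorm)
    also have "\<dots> \<le> C"
      unfolding C_def by (intro mult_right_mono B) (simp add: sum_nonneg)
    finally show ?thesis by linarith
  qed
  moreover obtain N where "\<forall>n\<ge>N. (\<Sum>j<n. dotp d (ws j) g) < - C"
    using assms by blast
  ultimately show False by (meson linorder_not_le order_refl)
qed

lemma bnd_win2_if_phs_win2: "phs_win2 d r ws \<Longrightarrow> bnd_win2 d \<rho> ws"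
  unfolding phs_win2_def using bnd_win2_if_dotp_sums_diverge by blast

lemma hatE_projects:
  "(x, w, y) \<in> hatE V1 V2 E d \<Longrightarrow> (fst x, w, fst y) \<in> E \<and> snd y \<in> HS V1 V2 E d"
  by (auto simp: hatE_def)

lemma hatE_intro:
  "\<lbrakk>(a, w, b) \<in> E; K \<in> HS V1 V2 E d; K' \<in> HS V1 V2 E d; a \<in> V1 \<longrightarrow> K = K'\<rbrakk>
   \<Longrightarrow> ((a, K), w, (b, K')) \<in> hatE V1 V2 E d"
  unfolding hatE_def by blast

lemma hat_strategy_move:
  assumes "strategy2 (hatV2 V1 V2 E d) (hatE V1 V2 E d) \<tau>" and "h \<noteq> []"
    and "fst (last h) \<in> V2" and "snd (last h) \<in> HS V1 V2 E d"
  shows "\<exists>w. (fst (last h), w, fst (\<tau> h)) \<in> E" and "snd (\<tau> h) \<in> HS V1 V2 E d"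
proof -
  have "last h \<in> hatV2 V1 V2 E d"
    using assms(3,4) by (cases "last h") (simp add: hatV2_def)
  then obtain w where "(last h, w, \<tau> h) \<in> hatE V1 V2 E d"
    using assms(1,2) unfolding strategy2_def by blast
  then show "\<exists>w. (fst (last h), w, fst (\<tau> h)) \<in> E" and "snd (\<tau> h) \<in> HS V1 V2 E d"
    using hatE_projects by blast+
qed

definition lift_history :: "'v set \<Rightarrow> (('v \<times> 'h) list \<Rightarrow> 'v \<times> 'h) \<Rightarrow> 'h \<Rightarrow> 'v list
    \<Rightarrow> ('v \<times> 'h) list" where
  "lift_history V2 \<tau> H h = rev (lift_rev V2 \<tau> H (rev h))"

lemma proj_eq: "proj V2 \<tau> H h = fst (\<tau> (lift_history V2 \<tau> H h))"
  by (simp add: proj_def lift_history_def)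

lemma map_fst_lift_rev: "map fst (lift_rev V2 \<tau> H xs) = xs"
  by (induction V2 \<tau> H xs rule: lift_rev.induct) (simp_all add: Let_def)

lemma map_fst_lift_history: "map fst (lift_history V2 \<tau> H h) = h"
  by (simp add: lift_history_def rev_map[symmetric] map_fst_lift_rev)

lemma lift_history_eq_Nil_iff [simp]: "lift_history V2 \<tau> H h = [] \<longleftrightarrow> h = []"
  by (metis map_fst_lift_history list.map_disc_iff)

lemma fst_last_lift_history: "h \<noteq> [] \<Longrightarrow> fst (last (lift_history V2 \<tau> H h)) = last h"
  by (metis map_fst_lift_history last_map lift_history_eq_Nil_iff)

lemma butlast_lift_history_snoc:
  "butlast (lift_history V2 \<tau> H (h @ [v])) = lift_history V2 \<tau> H h"
  by (cases "rev h") (simp_all add: lift_history_def Let_def butlast_rev)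

lemma lift_history_snoc:
  "lift_history V2 \<tau> H (h @ [v]) = lift_history V2 \<tau> H h @ [last (lift_history V2 \<tau> H (h @ [v]))]"
  using append_butlast_last_id[of "lift_history V2 \<tau> H (h @ [v])"]
  by (simp add: butlast_lift_history_snoc)

lemma snd_last_lift_history_snoc:
  assumes "h \<noteq> []"
  shows "snd (last (lift_history V2 \<tau> H (h @ [v]))) =
    (if last h \<in> V2 then snd (\<tau> (lift_history V2 \<tau> H h)) else snd (last (lift_history V2 \<tau> H h)))"
  using assms fst_last_lift_history[OF assms, of V2 \<tau> H]
  by (cases "rev h") (simp_all add: lift_history_def Let_def last_rev)

lemma lift_history_in_HS:
  assumes "strategy2 (hatV2 V1 V2 E d) (hatE V1 V2 E d) \<tau>" and "H \<in> HS V1 V2 E d"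
  shows "x \<in> set (lift_history V2 \<tau> H h) \<Longrightarrow> snd x \<in> HS V1 V2 E d"
proof (induction h arbitrary: x rule: rev_induct)
  case (snoc v h)
  show ?case
  proof (cases "x \<in> set (lift_history V2 \<tau> H h)")
    case False
    then have "x = last (lift_history V2 \<tau> H (h @ [v]))"
      using snoc.prems lift_history_snoc[of V2 \<tau> H h v]
      by (metis Un_iff empty_iff insert_iff list.set set_append)
    show ?thesis
    proof (cases "h = []")
      case True
      then show ?thesis using \<open>x = _\<close> assms(2) by (simp add: lift_history_def)
    next
      case False
      have "snd (last (lift_history V2 \<tau> H h)) \<in> HS V1 V2 E d"
        using snoc.IH False by simp
      moreover have "snd (\<tau> (lift_history V2 \<tau> H h)) \<in> HS V1 V2 E d" if "last h \<in> V2"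
        using hat_strategy_move(2)[OF assms(1)] False that calculation
        by (simp add: fst_last_lift_history)
      ultimately show ?thesis
        using \<open>x = _\<close> snd_last_lift_history_snoc[OF False, of V2 \<tau> H v] by auto
    qed
  qed (use snoc.IH in simp)
qed (simp add: lift_history_def)

lemma last_lift_history_in_hatV2:
  assumes "strategy2 (hatV2 V1 V2 E d) (hatE V1 V2 E d) \<tau>" and "H \<in> HS V1 V2 E d"
    and "h \<noteq> []" and "last h \<in> V2"
  shows "last (lift_history V2 \<tau> H h) \<in> hatV2 V1 V2 E d"
proof -
  have "snd (last (lift_history V2 \<tau> H h)) \<in> HS V1 V2 E d"
    using lift_history_in_HS[OF assms(1,2), of "last (lift_history V2 \<tau> H h)" h] assms(3)
    by simp
  then show ?thesis
    using assms(3,4) fst_last_lift_history[OF assms(3), of V2 \<tau> H]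
    by (auto simp: hatV2_def mem_Times_iff)
qed

lemma proj_is_strategy:
  assumes "strategy2 (hatV2 V1 V2 E d) (hatE V1 V2 E d) \<tau>" and "H \<in> HS V1 V2 E d"
  shows "strategy2 V2 E (proj V2 \<tau> H)"
  unfolding strategy2_def
proof (intro allI impI)
  fix h assume h: "h \<noteq> []" "last h \<in> V2"
  then obtain w where "(last (lift_history V2 \<tau> H h), w, \<tau> (lift_history V2 \<tau> H h)) \<in> hatE V1 V2 E d"
    using last_lift_history_in_hatV2[OF assms h] assms(1) unfolding strategy2_def
    by (metis lift_history_eq_Nil_iff)
  then show "\<exists>w. (last h, w, proj V2 \<tau> H h) \<in> E"
    using hatE_projects h(1) by (metis proj_eq fst_last_lift_history)
qed

lemma proj_positional:
  assumes "strategy2 (hatV2 V1 V2 E d) (hatE V1 V2 E d) \<tau>" and "H \<in> HS V1 V2 E d"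
    and "hs_oblivious (hatV2 V1 V2 E d) \<tau>"
  shows "positional2 V2 (proj V2 \<tau> H)"
  unfolding positional2_def
proof (intro allI impI)
  fix h h' assume h: "h \<noteq> []" "h' \<noteq> []" "last h \<in> V2" "last h = last h'"
  have "fst (\<tau> (lift_history V2 \<tau> H h)) = fst (\<tau> (lift_history V2 \<tau> H h'))"
    using assms(3) unfolding hs_oblivious_def
    using last_lift_history_in_hatV2[OF assms(1,2)] h fst_last_lift_history
    by (metis lift_history_eq_Nil_iff)
  then show "proj V2 \<tau> H h = proj V2 \<tau> H h'"
    by (simp add: proj_eq)
qed

definition lifted_play :: "'v set \<Rightarrow> (('v \<times> 'h) list \<Rightarrow> 'v \<times> 'h) \<Rightarrow> 'h \<Rightarrow> (nat \<Rightarrow> 'v)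
    \<Rightarrow> nat \<Rightarrow> 'v \<times> 'h" where
  "lifted_play V2 \<tau> H \<rho> n = last (lift_history V2 \<tau> H (map \<rho> [0..<Suc n]))"

lemma lift_history_play_prefix:
  "lift_history V2 \<tau> H (map \<rho> [0..<Suc n]) = map (lifted_play V2 \<tau> H \<rho>) [0..<Suc n]"
proof (induction n)
  case 0
  then show ?case by (simp add: lifted_play_def lift_history_def)
next
  case (Suc n)
  have prefix: "map \<rho> [0..<Suc (Suc n)] = map \<rho> [0..<Suc n] @ [\<rho> (Suc n)]"
    by simp
  have "lift_history V2 \<tau> H (map \<rho> [0..<Suc (Suc n)])
      = lift_history V2 \<tau> H (map \<rho> [0..<Suc n]) @ [lifted_play V2 \<tau> H \<rho> (Suc n)]"
    unfolding lifted_play_def prefix by (rule lift_history_snoc)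
  with Suc.IH show ?case by simp
qed

lemma fst_lifted_play: "fst (lifted_play V2 \<tau> H \<rho> n) = \<rho> n"
  by (simp add: lifted_play_def fst_last_lift_history)

lemma lifted_play_0: "lifted_play V2 \<tau> H \<rho> 0 = (\<rho> 0, H)"
  by (simp add: lifted_play_def lift_history_def)

lemma snd_lifted_play_Suc:
  "snd (lifted_play V2 \<tau> H \<rho> (Suc n)) =
    (if \<rho> n \<in> V2 then snd (\<tau> (map (lifted_play V2 \<tau> H \<rho>) [0..<Suc n]))
     else snd (lifted_play V2 \<tau> H \<rho> n))" (is "_ = ?rhs")
proof -
  have prefix: "map \<rho> [0..<Suc (Suc n)] = map \<rho> [0..<Suc n] @ [\<rho> (Suc n)]"
    by simp
  have "snd (lifted_play V2 \<tau> H \<rho> (Suc n))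
      = snd (last (lift_history V2 \<tau> H (map \<rho> [0..<Suc n] @ [\<rho> (Suc n)])))"
    unfolding lifted_play_def prefix ..
  also have "\<dots> = (if last (map \<rho> [0..<Suc n]) \<in> V2
      then snd (\<tau> (lift_history V2 \<tau> H (map \<rho> [0..<Suc n])))
      else snd (last (lift_history V2 \<tau> H (map \<rho> [0..<Suc n]))))"
    by (rule snd_last_lift_history_snoc) simp
  also have "\<dots> = ?rhs"
    by (simp only: lift_history_play_prefix last_map) simp
  finally show ?thesis .
qed

lemma lifted_play_is_play:
  assumes "strategy2 (hatV2 V1 V2 E d) (hatE V1 V2 E d) \<tau>" and "H \<in> HS V1 V2 E d"
    and "V1 \<inter> V2 = {}" and "play_from E v \<rho> ws"
  shows "play_from (hatE V1 V2 E d) (v, H) (lifted_play V2 \<tau> H \<rho>) ws"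
  unfolding play_from_def
proof (intro conjI allI)
  show "lifted_play V2 \<tau> H \<rho> 0 = (v, H)"
    using assms(4) by (simp add: lifted_play_0 play_from_def)
next
  fix i
  have HS: "snd (lifted_play V2 \<tau> H \<rho> n) \<in> HS V1 V2 E d" for n
    using lift_history_in_HS[OF assms(1,2), of _ "map \<rho> [0..<Suc n]"]
    by (simp add: lifted_play_def)
  have "(\<rho> i, ws i, \<rho> (Suc i)) \<in> E"
    using assms(4) by (simp add: play_from_def)
  moreover have "\<rho> i \<in> V1 \<longrightarrow> snd (lifted_play V2 \<tau> H \<rho> i) = snd (lifted_play V2 \<tau> H \<rho> (Suc i))"
    using assms(3) by (auto simp: snd_lifted_play_Suc)
  ultimately show "(lifted_play V2 \<tau> H \<rho> i, ws i, lifted_play V2 \<tau> H \<rho> (Suc i)) \<in> hatE V1 V2 E d"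
    using hatE_intro[OF _ HS HS] by (metis fst_lifted_play prod.collapse)
qed

lemma lifted_play_consistent:
  assumes "consistent2 V2 (proj V2 \<tau> H) \<rho>"
  shows "consistent2 (hatV2 V1 V2 E d) \<tau> (lifted_play V2 \<tau> H \<rho>)"
  unfolding consistent2_def
proof (intro allI impI)
  fix i assume "lifted_play V2 \<tau> H \<rho> i \<in> hatV2 V1 V2 E d"
  then have V2: "\<rho> i \<in> V2"
    using fst_lifted_play[of V2 \<tau> H \<rho> i] by (auto simp: hatV2_def)
  then have "\<rho> (Suc i) = fst (\<tau> (map (lifted_play V2 \<tau> H \<rho>) [0..<Suc i]))"
    using assms unfolding consistent2_def proj_eq lift_history_play_prefix by blast
  with V2 show "lifted_play V2 \<tau> H \<rho> (Suc i) = \<tau> (map (lifted_play V2 \<tau> H \<rho>) [0..<Suc i])"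
    by (simp add: prod_eq_iff fst_lifted_play snd_lifted_play_Suc del: upt_Suc)
qed

lemma proj_winning:
  assumes "V1 \<inter> V2 = {}" and "H \<in> HS V1 V2 E d"
    and win: "winning2 (hatV2 V1 V2 E d) (hatE V1 V2 E d) (phs_win2 d) (v, H) \<tau>"
  shows "winning2 V2 E (bnd_win2 d) v (proj V2 \<tau> H)"
proof -
  have \<tau>: "strategy2 (hatV2 V1 V2 E d) (hatE V1 V2 E d) \<tau>"
    using win by (simp add: winning2_def)
  have "phs_win2 d (lifted_play V2 \<tau> H \<rho>) ws"
    if "play_from E v \<rho> ws" and "consistent2 V2 (proj V2 \<tau> H) \<rho>" for \<rho> ws
    using win lifted_play_is_play[OF \<tau> assms(2,1) that(1)] lifted_play_consistent[OF that(2)]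
    by (simp add: winning2_def)
  then show ?thesis
    unfolding winning2_def using proj_is_strategy[OF \<tau> assms(2)] bnd_win2_if_phs_win2 by blast
qed

theorem mainTheorem7:
  fixes V1 V2 :: "'v set" and E :: "('v \<times> vec \<times> 'v) set" and d :: nat and v :: 'v
  assumes "game_graph V1 V2 E d" and "v \<in> V1 \<union> V2"
  shows "(\<forall>\<tau> H. H \<in> HS V1 V2 E d \<and>
            winning2 (hatV2 V1 V2 E d) (hatE V1 V2 E d) (phs_win2 d) (v, H) \<tau>
            \<longrightarrow> winning2 V2 E (bnd_win2 d) v (proj V2 \<tau> H))
       \<and> ((\<exists>H\<in>HS V1 V2 E d. wins2 (hatV2 V1 V2 E d) (hatE V1 V2 E d) (phs_win2 d) (v, H))
            \<longrightarrow> wins2 V2 E (bnd_win2 d) v)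
       \<and> (\<forall>\<tau> H. H \<in> HS V1 V2 E d \<and> strategy2 (hatV2 V1 V2 E d) (hatE V1 V2 E d) \<tau> \<and>
            positional2 (hatV2 V1 V2 E d) \<tau> \<and> hs_oblivious (hatV2 V1 V2 E d) \<tau>
            \<longrightarrow> positional2 V2 (proj V2 \<tau> H))"
proof -
  have disjoint: "V1 \<inter> V2 = {}"
    using assms(1) by (simp add: game_graph_def)
  show ?thesis
  proof (intro conjI allI impI)
    fix \<tau> H
    assume "H \<in> HS V1 V2 E d \<and> winning2 (hatV2 V1 V2 E d) (hatE V1 V2 E d) (phs_win2 d) (v, H) \<tau>"
    then show "winning2 V2 E (bnd_win2 d) v (proj V2 \<tau> H)"
      using proj_winning[OF disjoint] by blast
  next
    assume "\<exists>H\<in>HS V1 V2 E d. wins2 (hatV2 V1 V2 E d) (hatE V1 V2 E d) (phs_win2 d) (v, H)"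
    then show "wins2 V2 E (bnd_win2 d) v"
      unfolding wins2_def using proj_winning[OF disjoint] by blast
  next
    fix \<tau> H
    assume "H \<in> HS V1 V2 E d \<and> strategy2 (hatV2 V1 V2 E d) (hatE V1 V2 E d) \<tau> \<and>
      positional2 (hatV2 V1 V2 E d) \<tau> \<and> hs_oblivious (hatV2 V1 V2 E d) \<tau>"
    then show "positional2 V2 (proj V2 \<tau> H)"
      using proj_positional by blast
  qed
qed

end
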